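(* Let $F=\begin{pmatrix}1&0&-1\\0&0&0\\-1&0&1\end{pmatrix}$ (edge detect A filter). Then for all $m,n\in\mathbb{N}$, it is not the case that the equation $F*X=B$ with the reflexive boundary condition, for unknown $X\in\mathbb{R}^{m\times n}$, has a unique solution for every $B\in\mathbb{R}^{m\times n}$.
   Context: For $F=[f_{ij}]\in\mathbb{R}^{3\times3}$ and $X=[x_{ij}]\in\mathbb{R}^{m\times n}$, the convolution $F*X\in\mathbb{R}^{m\times n}$ is defined by $[F*X]_{ij}=\sum_{l_1=1}^3\sum_{l_2=1}^3 f_{l_1l_2}\,x_{i-l_1+2,\,j-l_2+2}$ for $1\le i\le m$, $1\le j\le n$, where the reflexive boundary condition sets $x_{0j}=x_{1j}$, $x_{m+1,j}=x_{mj}$, $x_{i0}=x_{i1}$, $x_{i,n+1}=x_{in}$ (for all indices $i\in\{0,\dots,m+1\}$, $j\in\{0,\dots,n+1\}$, so corners are also determined, e.g. $x_{00}=x_{11}$). *)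

theory Defs
  imports "HOL-Analysis.Analysis"
begin

text \<open>An m x n real matrix is represented as a function int => int => real, whose
  entries at indices 1..m, 1..n are the matrix entries (other values are irrelevant).\<close>

definition clamp :: "int \<Rightarrow> int \<Rightarrow> int" where
  "clamp k i = max 1 (min k i)"

text \<open>Reflexive boundary extension: for i in 0..m+1, j in 0..n+1.\<close>
definition refl_ext :: "nat \<Rightarrow> nat \<Rightarrow> (int \<Rightarrow> int \<Rightarrow> real) \<Rightarrow> int \<Rightarrow> int \<Rightarrow> real" where
  "refl_ext m n X i j = X (clamp (int m) i) (clamp (int n) j)"

definition conv_refl :: "nat \<Rightarrow> nat \<Rightarrow> (int \<Rightarrow> int \<Rightarrow> real) \<Rightarrow> (int \<Rightarrow> int \<Rightarrow> real) \<Rightarrow> int \<Rightarrow> int \<Rightarrow> real" where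
  "conv_refl m n F X i j =
     (\<Sum>l1\<in>{1..3}. \<Sum>l2\<in>{1..3}. F l1 l2 * refl_ext m n X (i - l1 + 2) (j - l2 + 2))"

definition idx :: "nat \<Rightarrow> nat \<Rightarrow> (int \<times> int) set" where
  "idx m n = {1..int m} \<times> {1..int n}"

definition solves :: "nat \<Rightarrow> nat \<Rightarrow> (int \<Rightarrow> int \<Rightarrow> real) \<Rightarrow> (int \<Rightarrow> int \<Rightarrow> real) \<Rightarrow> (int \<Rightarrow> int \<Rightarrow> real) \<Rightarrow> bool" where
  "solves m n F B X \<longleftrightarrow> (\<forall>(i,j)\<in>idx m n. conv_refl m n F X i j = B i j)"

definition uniquely_solvable :: "nat \<Rightarrow> nat \<Rightarrow> (int \<Rightarrow> int \<Rightarrow> real) \<Rightarrow> (int \<Rightarrow> int \<Rightarrow> real) \<Rightarrow> bool" where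
  "uniquely_solvable m n F B \<longleftrightarrow>
     (\<exists>X. solves m n F B X) \<and>
     (\<forall>X Y. solves m n F B X \<longrightarrow> solves m n F B Y \<longrightarrow> (\<forall>(i,j)\<in>idx m n. X i j = Y i j))"

text \<open>Edge detect A filter [[1,0,-1],[0,0,0],[-1,0,1]], indexed 1..3.\<close>
definition edgeA :: "int \<Rightarrow> int \<Rightarrow> real" where
  "edgeA l1 l2 = (if (l1 = 1 \<or> l1 = 3) \<and> (l2 = 1 \<or> l2 = 3) then (if l1 = l2 then 1 else -1) else 0)"

end

theory Submission
  imports Defs
begin

(* The reflexive extension of a constant matrix is constant, so a filter whose entries sum to
   zero maps every constant matrix to zero; the edge detect A filter is such a filter, hence
   F * X = 0 has the two distinct solutions X = 0 and X = 1. *)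

lemma conv_refl_const:
  "conv_refl m n F (\<lambda>_ _. c) i j = c * (\<Sum>l1\<in>{1..3}. \<Sum>l2\<in>{1..3}. F l1 l2)"
  unfolding conv_refl_def refl_ext_def by (simp add: sum_distrib_left mult.commute)

lemma edgeA_entries_sum_zero: "(\<Sum>l1\<in>{1..3}. \<Sum>l2\<in>{1..3}. edgeA l1 l2) = 0"
proof -
  have "{1..3::int} = {1, 2, 3}" by auto
  then show ?thesis by (simp add: edgeA_def)
qed

lemma not_uniquely_solvable_if_entries_sum_zero:
  assumes "(\<Sum>l1\<in>{1..3}. \<Sum>l2\<in>{1..3}. F l1 l2) = 0" and "m \<ge> 1" and "n \<ge> 1"
  shows "\<not> uniquely_solvable m n F (\<lambda>_ _. 0)"
proof
  assume unique: "uniquely_solvable m n F (\<lambda>_ _. 0)"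
  have const_solves: "solves m n F (\<lambda>_ _. 0) (\<lambda>_ _. c)" for c :: real
    unfolding solves_def conv_refl_const assms(1) by simp
  have "(1, 1) \<in> idx m n"
    using assms(2,3) unfolding idx_def by auto
  then show False
    using unique const_solves[of 0] const_solves[of 1] unfolding uniquely_solvable_def by fastforce
qed

theorem corollary9:
  fixes m n :: nat
  assumes "m \<ge> 1" and "n \<ge> 1"
  shows "\<not> (\<forall>B. uniquely_solvable m n edgeA B)"
  using not_uniquely_solvable_if_entries_sum_zero[OF edgeA_entries_sum_zero assms] by blast

end
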